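(* Let $u\in(\mathbb{N}\cup\{0\})^m$ and put $M:=\{x\in\mathbb{R}^m:0\leq x\leq u\}$ (entrywise order) with the metric induced by $\|\cdot\|_\infty$. Then $M\cap\mathbb{Z}^m$ is the unique optimal code in $(M,\|\cdot\|_\infty)$ of size $\prod_{i=1}^m(u_i+1)$.
   Context: For a finite $C\subseteq M$, $\delta(C):=\min\{\|x-y\|_\infty:x,y\in C,x\neq y\}$. An optimal code of size $n$ is an $n$-element subset $C\subseteq M$ maximizing $\delta(C)$ among all $n$-element subsets of $M$. *)

theory Defs
  imports "HOL-Analysis.Analysis"
begin

text \<open>Sup-norm on real^'m (the library norm on real^'m is Euclidean).\<close>
definition linf_norm :: "real ^ 'm \<Rightarrow> real" where
  "linf_norm x = Max (range (\<lambda>i. \<bar>x $ i\<bar>))"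

definition delta :: "(real ^ 'm) set \<Rightarrow> real" where
  "delta C = Min {linf_norm (x - y) | x y. x \<in> C \<and> y \<in> C \<and> x \<noteq> y}"

definition optimal_code :: "(real ^ 'm) set \<Rightarrow> nat \<Rightarrow> (real ^ 'm) set \<Rightarrow> bool" where
  "optimal_code M n C \<longleftrightarrow> C \<subseteq> M \<and> finite C \<and> card C = n \<and>
     (\<forall>D. D \<subseteq> M \<and> finite D \<and> card D = n \<longrightarrow> delta D \<le> delta C)"

definition nn_box :: "nat ^ 'm \<Rightarrow> (real ^ 'm) set" where
  "nn_box u = {x. \<forall>i. 0 \<le> x $ i \<and> x $ i \<le> real (u $ i)}"

end

theory Submission
  imports Defs
begin

text \<open>
  Rounding every point of a code down, respectively up, to the integer lattice is injective as soon
  as distinct code points are at sup-distance at least 1, since points with the same rounding are at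
  distance less than 1. A code of size \<open>\<Prod>i. u\<^sub>i + 1\<close> therefore is mapped bijectively onto the
  lattice points of the box by both roundings. Comparing the total coordinate sums of the two images,
  which both equal the coordinate sum of all lattice points, shows that rounding down and up agree on
  every coordinate, so the code consists of lattice points. Since the lattice points have minimum
  distance 1, every code at least as good is separated in this sense, which gives optimality and
  uniqueness at once.
\<close>

lemma abs_nth_le_linf_norm: "\<bar>x $ i\<bar> \<le> linf_norm x"
  unfolding linf_norm_def by (rule Max_ge) auto

lemma linf_norm_less_iff: "linf_norm x < c \<longleftrightarrow> (\<forall>i. \<bar>x $ i\<bar> < c)"
  unfolding linf_norm_def by (subst Max_less_iff) auto

lemma finite_distances:
  "finite C \<Longrightarrow> finite {linf_norm (x - y) | x y. x \<in> C \<and> y \<in> C \<and> x \<noteq> y}"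
  by (rule finite_subset[where B = "(\<lambda>(x, y). linf_norm (x - y)) ` (C \<times> C)"]) auto

lemma delta_le_linf_norm:
  assumes "finite C" "x \<in> C" "y \<in> C" "x \<noteq> y"
  shows "delta C \<le> linf_norm (x - y)"
  unfolding delta_def using assms by (intro Min_le finite_distances) blast+

lemma le_delta:
  assumes "finite C" "2 \<le> card C"
    and "\<And>x y. x \<in> C \<Longrightarrow> y \<in> C \<Longrightarrow> x \<noteq> y \<Longrightarrow> c \<le> linf_norm (x - y)"
  shows "c \<le> delta C"
proof -
  obtain x y where "x \<in> C" "y \<in> C" "x \<noteq> y"
    using assms(1,2) card_le_Suc0_iff_eq[of C] by fastforce
  then show ?thesis
    unfolding delta_def using assms by (subst Min_ge_iff) (auto intro: finite_distances)
qed

definition separated :: "(real ^ 'm) set \<Rightarrow> bool" where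
  "separated C \<longleftrightarrow> (\<forall>x\<in>C. \<forall>y\<in>C. x \<noteq> y \<longrightarrow> 1 \<le> linf_norm (x - y))"

lemma separated_if_delta_ge:
  assumes "finite C" "finite D" "card C = card D" "separated C" "delta C \<le> delta D"
  shows "separated D"
proof (cases "2 \<le> card D")
  case True
  then have "1 \<le> delta C"
    using assms(1,3,4) by (intro le_delta) (auto simp: separated_def)
  then show ?thesis
    using assms(2,5) delta_le_linf_norm[of D] unfolding separated_def by fastforce
next
  case False
  then show ?thesis
    using assms(2) card_le_Suc0_iff_eq[of D] unfolding separated_def by fastforce
qed

lemma separated_if_Ints:
  assumes "\<And>x i. x \<in> C \<Longrightarrow> x $ i \<in> \<int>"
  shows "separated C"
  unfolding separated_def
proof (intro ballI impI)
  fix x y assume "x \<in> C" "y \<in> C" "x \<noteq> y"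
  then obtain i where "(x - y) $ i \<in> \<int>" "(x - y) $ i \<noteq> 0"
    using assms by (auto simp: vec_eq_iff)
  then have "1 \<le> \<bar>(x - y) $ i\<bar>"
    by (rule Ints_nonzero_abs_ge1)
  then show "1 \<le> linf_norm (x - y)"
    using abs_nth_le_linf_norm order_trans by blast
qed

lemma inj_on_if_separated:
  assumes "separated D" "\<And>x y. x \<in> D \<Longrightarrow> y \<in> D \<Longrightarrow> r x = r y \<Longrightarrow> linf_norm (x - y) < 1"
  shows "inj_on r D"
  using assms unfolding separated_def inj_on_def by force

definition floor_vec :: "real ^ 'm \<Rightarrow> real ^ 'm" where
  "floor_vec x = (\<chi> i. of_int \<lfloor>x $ i\<rfloor>)"

definition ceiling_vec :: "real ^ 'm \<Rightarrow> real ^ 'm" where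
  "ceiling_vec x = (\<chi> i. of_int \<lceil>x $ i\<rceil>)"

lemma linf_norm_less_one_if_floor_vec_eq:
  assumes "floor_vec x = floor_vec y"
  shows "linf_norm (x - y) < 1"
  unfolding linf_norm_less_iff
proof
  fix i
  have "real_of_int \<lfloor>x $ i\<rfloor> = real_of_int \<lfloor>y $ i\<rfloor>"
    using assms by (simp add: floor_vec_def vec_eq_iff)
  then show "\<bar>(x - y) $ i\<bar> < 1"
    using floor_correct[of "x $ i"] floor_correct[of "y $ i"]
    unfolding vector_minus_component abs_less_iff by linarith
qed

lemma linf_norm_less_one_if_ceiling_vec_eq:
  assumes "ceiling_vec x = ceiling_vec y"
  shows "linf_norm (x - y) < 1"
  unfolding linf_norm_less_iff
proof
  fix i
  have "real_of_int \<lceil>x $ i\<rceil> = real_of_int \<lceil>y $ i\<rceil>"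
    using assms by (simp add: ceiling_vec_def vec_eq_iff)
  then show "\<bar>(x - y) $ i\<bar> < 1"
    using ceiling_correct[of "x $ i"] ceiling_correct[of "y $ i"]
    unfolding vector_minus_component abs_less_iff by linarith
qed

lemma Ints_if_floor_eq_ceiling:
  fixes a :: real
  assumes "\<lfloor>a\<rfloor> = \<lceil>a\<rceil>"
  shows "a \<in> \<int>"
proof -
  have "a = of_int \<lfloor>a\<rfloor>"
    using of_int_floor_le[of a] le_of_int_ceiling[of a] assms by linarith
  then show ?thesis
    by (metis Ints_of_int)
qed

definition int_points :: "nat ^ 'm \<Rightarrow> (real ^ 'm) set" where
  "int_points u = nn_box u \<inter> {x. \<forall>i. x $ i \<in> \<int>}"

lemma floor_vec_in_int_points: "x \<in> nn_box u \<Longrightarrow> floor_vec x \<in> int_points u"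
  unfolding int_points_def nn_box_def floor_vec_def
  by (auto simp: floor_le_iff le_floor_iff intro: order_trans[OF of_int_floor_le])

lemma ceiling_vec_in_int_points:
  assumes "x \<in> nn_box u"
  shows "ceiling_vec x \<in> int_points u"
proof -
  have "0 \<le> x $ i" "x $ i \<le> real (u $ i)" for i
    using assms by (simp_all add: nn_box_def)
  then have "0 \<le> real_of_int \<lceil>x $ i\<rceil>" "real_of_int \<lceil>x $ i\<rceil> \<le> real (u $ i)" for i
    by (meson le_of_int_ceiling order_trans, metis ceiling_le_iff of_int_le_iff of_int_of_nat_eq)
  then show ?thesis
    unfolding int_points_def nn_box_def ceiling_vec_def by simp
qed

lemma int_points_eq_image: "int_points u = (\<lambda>p. \<chi> i. real (p i)) ` (\<Pi>\<^sub>E i\<in>UNIV. {..u $ i})"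
proof (intro equalityI subsetI)
  fix x assume x: "x \<in> int_points u"
  then have "x = (\<chi> i. real (nat \<lfloor>x $ i\<rfloor>))"
    unfolding int_points_def nn_box_def by (auto simp: vec_eq_iff elim!: Ints_cases)
  moreover have "nat \<lfloor>x $ i\<rfloor> \<le> u $ i" for i
  proof -
    have "x $ i \<le> real (u $ i)"
      using x by (simp add: int_points_def nn_box_def)
    then show ?thesis
      by (simp add: nat_le_iff floor_le_iff)
  qed
  then have "(\<lambda>i. nat \<lfloor>x $ i\<rfloor>) \<in> (\<Pi>\<^sub>E i\<in>UNIV. {..u $ i})"
    by (simp add: PiE_iff)
  ultimately show "x \<in> (\<lambda>p. \<chi> i. real (p i)) ` (\<Pi>\<^sub>E i\<in>UNIV. {..u $ i})"
    by (rule image_eqI)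
qed (auto simp: int_points_def nn_box_def)

lemma finite_int_points: "finite (int_points u)"
  unfolding int_points_eq_image by (intro finite_imageI finite_PiE) auto

lemma card_int_points: "card (int_points u) = (\<Prod>i\<in>UNIV. u $ i + 1)"
proof -
  have "inj (\<lambda>p. \<chi> i. real (p i) :: real ^ 'a)"
    by (auto intro!: injI simp: vec_eq_iff)
  then show ?thesis
    unfolding int_points_eq_image by (simp add: card_image inj_on_subset card_PiE)
qed

lemma bij_betw_if_inj_on_card_eq:
  assumes "finite B" "inj_on f A" "f ` A \<subseteq> B" "card A = card B"
  shows "bij_betw f A B"
  using assms by (simp add: bij_betw_def card_image card_subset_eq)

lemma sum_mono_eq_imp_eq:
  fixes f g :: "'a \<Rightarrow> 'b::ordered_cancel_comm_monoid_add"
  assumes "finite A" "\<forall>x\<in>A. f x \<le> g x" "sum f A = sum g A" "x \<in> A"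
  shows "f x = g x"
proof (rule ccontr)
  assume "f x \<noteq> g x"
  then have "sum f A < sum g A"
    using assms by (intro sum_strict_mono_ex1) (auto simp: order_less_le)
  with assms(3) show False by simp
qed

lemma sum_bij_betw_mono_imp_eq:
  fixes s :: "'b \<Rightarrow> 'c::ordered_cancel_comm_monoid_add"
  assumes "finite B" "bij_betw f A B" "bij_betw g A B" "\<forall>x\<in>A. s (f x) \<le> s (g x)" "x \<in> A"
  shows "s (f x) = s (g x)"
proof -
  have "(\<Sum>x\<in>A. s (f x)) = (\<Sum>x\<in>A. s (g x))"
    using sum.reindex_bij_betw[OF assms(2), of s] sum.reindex_bij_betw[OF assms(3), of s] by simp
  moreover have "finite A"
    using assms(1,2) bij_betw_finite by blast
  ultimately show ?thesis
    using assms(4,5) by (intro sum_mono_eq_imp_eq[where f = "\<lambda>x. s (f x)" and g = "\<lambda>x. s (g x)"])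
qed

lemma separated_eq_int_points:
  fixes u :: "nat ^ 'm"
  assumes D: "D \<subseteq> nn_box u" "card D = card (int_points u)" "separated D"
  shows "D = int_points u"
proof -
  have bij_floor: "bij_betw floor_vec D (int_points u)"
    using D floor_vec_in_int_points linf_norm_less_one_if_floor_vec_eq
    by (intro bij_betw_if_inj_on_card_eq finite_int_points inj_on_if_separated) blast+
  have bij_ceiling: "bij_betw ceiling_vec D (int_points u)"
    using D ceiling_vec_in_int_points linf_norm_less_one_if_ceiling_vec_eq
    by (intro bij_betw_if_inj_on_card_eq finite_int_points inj_on_if_separated) blast+
  have floor_le: "floor_vec y $ j \<le> ceiling_vec y $ j" for y :: "real ^ 'm" and j
    by (simp add: floor_vec_def ceiling_vec_def)
  have Ints: "x $ i \<in> \<int>" if "x \<in> D" for x i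
  proof -
    have "(\<Sum>j\<in>UNIV. floor_vec x $ j) = (\<Sum>j\<in>UNIV. ceiling_vec x $ j)"
      using that
      by (intro sum_bij_betw_mono_imp_eq[OF finite_int_points bij_floor bij_ceiling,
            where s = "\<lambda>z. \<Sum>j\<in>UNIV. z $ j"])
        (simp_all add: sum_mono floor_le)
    then have "floor_vec x $ i = ceiling_vec x $ i"
      by (intro sum_mono_eq_imp_eq[where A = UNIV and f = "\<lambda>j. floor_vec x $ j"
            and g = "\<lambda>j. ceiling_vec x $ j"]) (simp_all add: floor_le)
    then show ?thesis
      by (intro Ints_if_floor_eq_ceiling) (simp add: floor_vec_def ceiling_vec_def)
  qed
  have "D \<subseteq> int_points u"
    using D(1) Ints unfolding int_points_def by blast
  with D(2) show ?thesis
    by (intro card_subset_eq finite_int_points)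
qed

lemma eq_int_points_if_delta_ge:
  assumes D: "D \<subseteq> nn_box u" "finite D" "card D = (\<Prod>i\<in>UNIV. u $ i + 1)"
    and delta_ge: "delta (int_points u) \<le> delta D"
  shows "D = int_points u"
proof -
  have card_eq: "card (int_points u) = card D"
    using D(3) card_int_points by simp
  have "separated (int_points u)"
    by (rule separated_if_Ints) (simp add: int_points_def)
  then have "separated D"
    using separated_if_delta_ge[OF finite_int_points D(2) card_eq] delta_ge by blast
  then show ?thesis
    using separated_eq_int_points[OF D(1)] card_eq by simp
qed

theorem lemma4p3:
  fixes u :: "nat ^ 'm"
  shows "optimal_code (nn_box u) (\<Prod>i\<in>UNIV. u $ i + 1) (nn_box u \<inter> {x. \<forall>i. x $ i \<in> \<int>})
       \<and> (\<forall>C. optimal_code (nn_box u) (\<Prod>i\<in>UNIV. u $ i + 1) C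
              \<longrightarrow> C = nn_box u \<inter> {x. \<forall>i. x $ i \<in> \<int>})"
proof -
  let ?N = "\<Prod>i\<in>UNIV. u $ i + 1"
  have optimal: "optimal_code (nn_box u) ?N (int_points u)"
    unfolding optimal_code_def
  proof (intro conjI allI impI)
    show "int_points u \<subseteq> nn_box u"
      by (simp add: int_points_def)
    show "finite (int_points u)" "card (int_points u) = ?N"
      by (rule finite_int_points, rule card_int_points)
    fix D assume "D \<subseteq> nn_box u \<and> finite D \<and> card D = ?N"
    then show "delta D \<le> delta (int_points u)"
      using eq_int_points_if_delta_ge[of D u] by (cases "delta D \<le> delta (int_points u)") auto
  qed
  have "C = int_points u" if "optimal_code (nn_box u) ?N C" for C
    using that optimal eq_int_points_if_delta_ge[of C u] by (simp add: optimal_code_def)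
  with optimal show ?thesis
    unfolding int_points_def by blast
qed

end
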